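(* Let $A$ and $B$ be rings, $f: A\to B$ an injective ring homomorphism and $J$ a proper ideal of $B$. Suppose that either (i) $f(A)\cap J=\{0\}$, or (ii) $J\subseteq\mathrm{nil}(B)$. Then $A\bowtie^{f}J$ is a nil-Armendariz ring if and only if $f(A)+J$ is a nil-Armendariz ring.
   Context: All rings are associative with identity (not necessarily commutative), ring homomorphisms are unital, and ideals are two-sided. $\mathrm{nil}(R)$ denotes the set of nilpotent elements of a ring $R$, and $\mathrm{nil}(R)[x]$ the set of polynomials all of whose coefficients lie in $\mathrm{nil}(R)$. For a ring homomorphism $f:A\to B$ and an ideal $J$ of $B$, the amalgamation is the subring $A\bowtie^{f}J=\{(a,f(a)+j)\mid a\in A,\ j\in J\}$ of $A\times B$; $f(A)+J=\{f(a)+j: a\in A, j\in J\}$ is a subring of $B$. A ring $R$ is nil-Armendariz if whenever $p(x)=\sum_{i=0}^n a_ix^i$ and $q(x)=\sum_{j=0}^m b_jx^j$ in $R[x]$ satisfy $p(x)q(x)\in\mathrm{nil}(R)[x]$, then $a_ib_j\in\mathrm{nil}(R)$ for all $i,j$. *)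

theory Defs
  imports "HOL-Algebra.Algebra"
begin

definition nilr :: "('a, 'm) ring_scheme \<Rightarrow> 'a set" where
  "nilr R = {x \<in> carrier R. \<exists>n::nat. x [^]\<^bsub>R\<^esub> n = \<zero>\<^bsub>R\<^esub>}"

text \<open>Nil-Armendariz rings, via the univariate polynomial ring UP R
  (coefficients of the product p q are sums of p i times q (k - i), in this order).\<close>
definition nil_armendariz :: "('a, 'm) ring_scheme \<Rightarrow> bool" where
  "nil_armendariz R \<longleftrightarrow>
     (\<forall>p \<in> carrier (UP R). \<forall>q \<in> carrier (UP R).
        (\<forall>k. coeff (UP R) (p \<otimes>\<^bsub>UP R\<^esub> q) k \<in> nilr R) \<longrightarrow>
        (\<forall>i j. coeff (UP R) p i \<otimes>\<^bsub>R\<^esub> coeff (UP R) q j \<in> nilr R))"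

definition amalg :: "('a, 'm) ring_scheme \<Rightarrow> ('b, 'n) ring_scheme \<Rightarrow> ('a \<Rightarrow> 'b) \<Rightarrow> 'b set
                      \<Rightarrow> ('a \<times> 'b) ring" where
  "amalg A B f J = (RDirProd A B)\<lparr> carrier :=
      {(a, f a \<oplus>\<^bsub>B\<^esub> j) | a j. a \<in> carrier A \<and> j \<in> J} \<rparr>"

definition fA_plus_J :: "('a, 'm) ring_scheme \<Rightarrow> ('b, 'n) ring_scheme \<Rightarrow> ('a \<Rightarrow> 'b) \<Rightarrow> 'b set
                      \<Rightarrow> ('b, 'n) ring_scheme" where
  "fA_plus_J A B f J = B\<lparr> carrier := {f a \<oplus>\<^bsub>B\<^esub> j | a j. a \<in> carrier A \<and> j \<in> J} \<rparr>"

end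

theory Submission
  imports Defs
begin

text \<open>The second projection \<open>(a, f a + j) \<mapsto> f a + j\<close> is a surjective ring homomorphism
  from \<open>A \<bowtie>\<^sup>f J\<close> onto \<open>f(A) + J\<close>. Polynomials can be lifted along a surjective ring
  homomorphism coefficientwise, and the coefficients of products are mapped to each other, so
  such a homomorphism transfers the nil-Armendariz property in both directions as soon as it
  also reflects nilpotency. Here it does: if \<open>(f a + j)\<^sup>n = 0\<close> then \<open>(a\<^sup>n, 0)\<close> lies in the
  amalgamation, so \<open>f(a\<^sup>n) \<in> J\<close>; either hypothesis makes \<open>f(a\<^sup>n)\<close> nilpotent, and injectivity
  of \<open>f\<close> then makes \<open>a\<close> nilpotent.\<close>

lemma coeff_UP: "p \<in> carrier (UP R) \<Longrightarrow> coeff (UP R) p n = p n"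
  by (simp add: UP_def)

lemma carrier_UP_iff:
  "p \<in> carrier (UP R) \<longleftrightarrow> (\<forall>n. p n \<in> carrier R) \<and> (\<exists>n. \<forall>m>n. p m = \<zero>\<^bsub>R\<^esub>)"
  by (auto simp add: UP_def up_def bound_def)

lemma UP_mult_closed_ring:
  assumes "ring R" and "p \<in> carrier (UP R)" and "q \<in> carrier (UP R)"
  shows "p \<otimes>\<^bsub>UP R\<^esub> q \<in> carrier (UP R)"
  using UP_ring.UP_mult_closed[of R] assms by (simp add: UP_ring_def)

lemma coeff_UP_mult:
  assumes "ring R" and "p \<in> carrier (UP R)" and "q \<in> carrier (UP R)"
  shows "coeff (UP R) (p \<otimes>\<^bsub>UP R\<^esub> q) k = (\<Oplus>\<^bsub>R\<^esub> i \<in> {..k}. p i \<otimes>\<^bsub>R\<^esub> q (k - i))"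
  using UP_ring.coeff_mult[of R] assms by (simp add: UP_ring_def coeff_UP)

lemma UP_map_closed:
  assumes "ring_hom_ring R S h" and "p \<in> carrier (UP R)"
  shows "h \<circ> p \<in> carrier (UP S)"
proof -
  interpret H: ring_hom_ring R S h by fact
  show ?thesis using assms(2) unfolding carrier_UP_iff by (metis comp_apply H.hom_closed H.hom_zero)
qed

lemma coeff_UP_map_mult:
  assumes "ring_hom_ring R S h" and "p \<in> carrier (UP R)" and "q \<in> carrier (UP R)"
  shows "h (coeff (UP R) (p \<otimes>\<^bsub>UP R\<^esub> q) k) = coeff (UP S) ((h \<circ> p) \<otimes>\<^bsub>UP S\<^esub> (h \<circ> q)) k"
proof -
  interpret H: ring_hom_ring R S h by fact
  have pq: "\<And>n. p n \<in> carrier R" "\<And>n. q n \<in> carrier R"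
    using assms(2,3) unfolding carrier_UP_iff by auto
  have "h (coeff (UP R) (p \<otimes>\<^bsub>UP R\<^esub> q) k)
      = h (\<Oplus>\<^bsub>R\<^esub> i \<in> {..k}. p i \<otimes>\<^bsub>R\<^esub> q (k - i))"
    using assms(2,3) by (simp add: coeff_UP_mult H.R.ring_axioms)
  also have "\<dots> = (\<Oplus>\<^bsub>S\<^esub> i \<in> {..k}. h (p i \<otimes>\<^bsub>R\<^esub> q (k - i)))"
    using H.hom_finsum[of "\<lambda>i. p i \<otimes>\<^bsub>R\<^esub> q (k - i)" "{..k}"] pq by (simp add: comp_def)
  also have "\<dots> = (\<Oplus>\<^bsub>S\<^esub> i \<in> {..k}. h (p i) \<otimes>\<^bsub>S\<^esub> h (q (k - i)))"
    using pq by (intro H.S.finsum_cong') auto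
  also have "\<dots> = coeff (UP S) ((h \<circ> p) \<otimes>\<^bsub>UP S\<^esub> (h \<circ> q)) k"
    using assms UP_map_closed[OF assms(1)] by (simp add: coeff_UP_mult H.S.ring_axioms)
  finally show ?thesis .
qed

lemma UP_map_surj:
  assumes "ring_hom_ring R S h" and "h ` carrier R = carrier S" and "P \<in> carrier (UP S)"
  obtains p where "p \<in> carrier (UP R)" and "P = h \<circ> p"
proof -
  interpret H: ring_hom_ring R S h by fact
  obtain d where P: "\<And>n. P n \<in> carrier S" "\<And>m. m > d \<Longrightarrow> P m = \<zero>\<^bsub>S\<^esub>"
    using assms(3) unfolding carrier_UP_iff by auto
  define p where
    "p n = (if P n = \<zero>\<^bsub>S\<^esub> then \<zero>\<^bsub>R\<^esub> else (SOME x. x \<in> carrier R \<and> h x = P n))" for n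
  have p_lifts: "p n \<in> carrier R \<and> h (p n) = P n" for n
  proof -
    have "\<exists>x. x \<in> carrier R \<and> h x = P n"
      using assms(2) P(1)[of n] by (metis imageE)
    then show ?thesis
      unfolding p_def using someI_ex[of "\<lambda>x. x \<in> carrier R \<and> h x = P n"] by simp
  qed
  have "p \<in> carrier (UP R)"
    unfolding carrier_UP_iff using p_lifts P(2) by (auto simp: p_def)
  moreover have "P = h \<circ> p"
    using p_lifts by (simp add: fun_eq_iff)
  ultimately show ?thesis by (rule that)
qed

lemma nil_armendariz_iff_surj_hom:
  assumes hom: "ring_hom_ring R S h" and surj: "h ` carrier R = carrier S"
    and nil: "\<And>x. x \<in> carrier R \<Longrightarrow> x \<in> nilr R \<longleftrightarrow> h x \<in> nilr S"
  shows "nil_armendariz R \<longleftrightarrow> nil_armendariz S"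
proof -
  interpret H: ring_hom_ring R S h by fact
  have coeff_closed: "coeff (UP R) p n \<in> carrier R" if "p \<in> carrier (UP R)" for p n
    using that coeff_UP unfolding carrier_UP_iff by metis
  have product_nil: "(\<forall>k. coeff (UP R) (p \<otimes>\<^bsub>UP R\<^esub> q) k \<in> nilr R) \<longleftrightarrow>
      (\<forall>k. coeff (UP S) ((h \<circ> p) \<otimes>\<^bsub>UP S\<^esub> (h \<circ> q)) k \<in> nilr S)"
    if "p \<in> carrier (UP R)" "q \<in> carrier (UP R)" for p q
    using nil coeff_closed[OF UP_mult_closed_ring[OF H.R.ring_axioms that]]
      coeff_UP_map_mult[OF hom that] by metis
  have coeff_products_nil: "coeff (UP R) p i \<otimes>\<^bsub>R\<^esub> coeff (UP R) q j \<in> nilr R \<longleftrightarrow>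
      coeff (UP S) (h \<circ> p) i \<otimes>\<^bsub>S\<^esub> coeff (UP S) (h \<circ> q) j \<in> nilr S"
    if "p \<in> carrier (UP R)" "q \<in> carrier (UP R)" for p q i j
  proof -
    have "coeff (UP S) (h \<circ> p) i \<otimes>\<^bsub>S\<^esub> coeff (UP S) (h \<circ> q) j
        = h (coeff (UP R) p i \<otimes>\<^bsub>R\<^esub> coeff (UP R) q j)"
      using that coeff_closed by (simp add: coeff_UP UP_map_closed[OF hom])
    then show ?thesis using nil coeff_closed that by simp
  qed
  have lift: "(\<forall>P \<in> carrier (UP S). \<Phi> P) \<longleftrightarrow> (\<forall>p \<in> carrier (UP R). \<Phi> (h \<circ> p))" for \<Phi>
    using UP_map_closed[OF hom] UP_map_surj[OF hom surj] by blast
  show ?thesis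
    unfolding nil_armendariz_def lift using product_nil coeff_products_nil by auto
qed

lemma (in semiring) nat_pow_eq_zero_mono:
  assumes "x \<in> carrier R" and "x [^] (n::nat) = \<zero>" and "n \<le> m"
  shows "x [^] m = \<zero>"
proof -
  have "x [^] m = x [^] n \<otimes> x [^] (m - n)"
    using assms(1,3) by (simp add: nat_pow_mult)
  then show ?thesis using assms(1,2) by simp
qed

lemma (in ring) nilr_of_nat_pow:
  assumes "x \<in> carrier R" and "x [^] (n::nat) \<in> nilr R"
  shows "x \<in> nilr R"
proof -
  obtain m :: nat where "(x [^] n) [^] m = \<zero>" using assms(2) unfolding nilr_def by blast
  then have "x [^] (n * m) = \<zero>" using assms(1) by (simp add: nat_pow_pow)
  then show ?thesis using assms(1) unfolding nilr_def by blast
qed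

lemma (in ring_hom_ring) nilr_of_inj_hom:
  assumes "inj_on h (carrier R)" and "x \<in> carrier R" and "h x \<in> nilr S"
  shows "x \<in> nilr R"
proof -
  obtain n :: nat where "h x [^]\<^bsub>S\<^esub> n = \<zero>\<^bsub>S\<^esub>" using assms(3) unfolding nilr_def by blast
  then have "h (x [^] n) = h \<zero>" using assms(2) by (simp add: hom_nat_pow)
  then have "x [^] n = \<zero>"
    using assms(1,2) by (metis inj_onD R.nat_pow_closed R.zero_closed)
  then show ?thesis using assms(2) unfolding nilr_def by blast
qed

lemma RDirProd_mult [simp]: "(a, b) \<otimes>\<^bsub>RDirProd A B\<^esub> (c, d) = (a \<otimes>\<^bsub>A\<^esub> c, b \<otimes>\<^bsub>B\<^esub> d)"
  and RDirProd_add [simp]: "(a, b) \<oplus>\<^bsub>RDirProd A B\<^esub> (c, d) = (a \<oplus>\<^bsub>A\<^esub> c, b \<oplus>\<^bsub>B\<^esub> d)"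
  and RDirProd_one [simp]: "\<one>\<^bsub>RDirProd A B\<^esub> = (\<one>\<^bsub>A\<^esub>, \<one>\<^bsub>B\<^esub>)"
  and RDirProd_zero [simp]: "\<zero>\<^bsub>RDirProd A B\<^esub> = (\<zero>\<^bsub>A\<^esub>, \<zero>\<^bsub>B\<^esub>)"
  by (simp_all add: RDirProd_def DirProd_def monoid.defs)

lemma RDirProd_a_inv [simp]:
  assumes "ring A" and "ring B" and "a \<in> carrier A" and "b \<in> carrier B"
  shows "\<ominus>\<^bsub>RDirProd A B\<^esub> (a, b) = (\<ominus>\<^bsub>A\<^esub> a, \<ominus>\<^bsub>B\<^esub> b)"
  unfolding a_inv_def RDirProd_add_monoid
  using assms by (simp add: abelian_group.a_group ring.is_abelian_group)

lemma nat_pow_amalg: "(a, b) [^]\<^bsub>amalg A B f J\<^esub> (n::nat) = (a [^]\<^bsub>A\<^esub> n, b [^]\<^bsub>B\<^esub> n)"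
  by (induct n) (simp_all add: amalg_def)

lemma nat_pow_fA_plus_J: "b [^]\<^bsub>fA_plus_J A B f J\<^esub> (n::nat) = b [^]\<^bsub>B\<^esub> n"
  by (induct n) (simp_all add: fA_plus_J_def)

lemma zero_amalg [simp]: "\<zero>\<^bsub>amalg A B f J\<^esub> = (\<zero>\<^bsub>A\<^esub>, \<zero>\<^bsub>B\<^esub>)"
  by (simp add: amalg_def)

lemma zero_fA_plus_J [simp]: "\<zero>\<^bsub>fA_plus_J A B f J\<^esub> = \<zero>\<^bsub>B\<^esub>"
  by (simp add: fA_plus_J_def)

lemma snd_image_carrier_amalg: "snd ` carrier (amalg A B f J) = carrier (fA_plus_J A B f J)"
  by (force simp: amalg_def fA_plus_J_def)

lemma ring_hom_ring_snd:
  assumes "ring A" and "ring B"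
  shows "ring_hom_ring (RDirProd A B) B snd"
  by (intro ring_hom_ringI2 RDirProd_ring assms) (auto simp: ring_hom_def RDirProd_carrier)

context
  fixes A :: "('a, 'm) ring_scheme" and B :: "('b, 'n) ring_scheme"
    and f :: "'a \<Rightarrow> 'b" and J :: "'b set"
  assumes hom: "ring_hom_ring A B f" and J: "ideal J B"
begin

interpretation f: ring_hom_ring A B f by (fact hom)
interpretation J: ideal J B by (fact J)

lemma mem_carrier_amalg_iff:
  "(a, b) \<in> carrier (amalg A B f J) \<longleftrightarrow> a \<in> carrier A \<and> b \<in> carrier B \<and> b \<ominus>\<^bsub>B\<^esub> f a \<in> J"
proof
  assume "(a, b) \<in> carrier (amalg A B f J)"
  then obtain j where "a \<in> carrier A" "j \<in> J" "b = f a \<oplus>\<^bsub>B\<^esub> j"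
    by (auto simp: amalg_def)
  moreover have "j \<in> carrier B" using \<open>j \<in> J\<close> J.a_subset by blast
  ultimately show "a \<in> carrier A \<and> b \<in> carrier B \<and> b \<ominus>\<^bsub>B\<^esub> f a \<in> J"
    by (simp add: f.S.minus_eq f.S.a_ac f.S.r_neg)
next
  assume "a \<in> carrier A \<and> b \<in> carrier B \<and> b \<ominus>\<^bsub>B\<^esub> f a \<in> J"
  moreover have "b = f a \<oplus>\<^bsub>B\<^esub> (b \<ominus>\<^bsub>B\<^esub> f a)" if "a \<in> carrier A" "b \<in> carrier B"
    using that by (simp add: f.S.minus_eq f.S.a_ac f.S.r_neg)
  ultimately show "(a, b) \<in> carrier (amalg A B f J)"
    by (auto simp: amalg_def)
qed

lemma nilr_fA_plus_J_iff:
  "y \<in> nilr (fA_plus_J A B f J) \<longleftrightarrow> y \<in> carrier (fA_plus_J A B f J) \<and> y \<in> nilr B"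
proof -
  have "carrier (fA_plus_J A B f J) \<subseteq> carrier B"
    using J.a_subset by (auto simp: fA_plus_J_def)
  then show ?thesis unfolding nilr_def nat_pow_fA_plus_J zero_fA_plus_J by blast
qed

lemma subring_amalg: "subring (carrier (amalg A B f J)) (RDirProd A B)"
proof (rule ring.subringI[OF RDirProd_ring[OF f.R.ring_axioms f.S.ring_axioms]])
  have J_closed: "x \<in> J \<Longrightarrow> x \<in> carrier B" for x using J.a_subset by blast
  note mem = mem_carrier_amalg_iff
  show "carrier (amalg A B f J) \<subseteq> carrier (RDirProd A B)"
    by (auto simp: mem RDirProd_carrier)
  show "\<one>\<^bsub>RDirProd A B\<^esub> \<in> carrier (amalg A B f J)"
    by (simp add: mem f.S.minus_eq f.S.r_neg J.zero_closed)
  fix x y assume x: "x \<in> carrier (amalg A B f J)" and y: "y \<in> carrier (amalg A B f J)"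
  obtain a b c d where xy: "x = (a, b)" "y = (c, d)" by fastforce
  from x y have abcd: "a \<in> carrier A" "b \<in> carrier B" "c \<in> carrier A" "d \<in> carrier B"
    and j: "b \<ominus>\<^bsub>B\<^esub> f a \<in> J" and k: "d \<ominus>\<^bsub>B\<^esub> f c \<in> J"
    by (auto simp: xy mem)
  have "\<ominus>\<^bsub>B\<^esub> b \<ominus>\<^bsub>B\<^esub> f (\<ominus>\<^bsub>A\<^esub> a) = \<ominus>\<^bsub>B\<^esub> (b \<ominus>\<^bsub>B\<^esub> f a)"
    using abcd by (simp add: f.S.minus_eq f.S.minus_add)
  then show "\<ominus>\<^bsub>RDirProd A B\<^esub> x \<in> carrier (amalg A B f J)"
    using abcd j by (simp add: xy mem f.R.ring_axioms f.S.ring_axioms J.a_inv_closed)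
  have "b \<otimes>\<^bsub>B\<^esub> d \<ominus>\<^bsub>B\<^esub> f (a \<otimes>\<^bsub>A\<^esub> c)
      = (b \<ominus>\<^bsub>B\<^esub> f a) \<otimes>\<^bsub>B\<^esub> d \<oplus>\<^bsub>B\<^esub> f a \<otimes>\<^bsub>B\<^esub> (d \<ominus>\<^bsub>B\<^esub> f c)"
    using abcd
    by (simp add: f.S.minus_eq f.S.l_distr f.S.r_distr f.S.a_ac f.S.l_minus f.S.r_minus f.S.r_neg2)
  then show "x \<otimes>\<^bsub>RDirProd A B\<^esub> y \<in> carrier (amalg A B f J)"
    using abcd j k J_closed by (simp add: xy mem J.a_closed J.I_l_closed J.I_r_closed)
  have "b \<oplus>\<^bsub>B\<^esub> d \<ominus>\<^bsub>B\<^esub> f (a \<oplus>\<^bsub>A\<^esub> c) = (b \<ominus>\<^bsub>B\<^esub> f a) \<oplus>\<^bsub>B\<^esub> (d \<ominus>\<^bsub>B\<^esub> f c)"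
    using abcd by (simp add: f.S.minus_eq f.S.minus_add f.S.a_ac)
  then show "x \<oplus>\<^bsub>RDirProd A B\<^esub> y \<in> carrier (amalg A B f J)"
    using abcd j k by (simp add: xy mem J.a_closed)
qed

lemma ring_amalg: "ring (amalg A B f J)"
proof -
  have "amalg A B f J = (RDirProd A B)\<lparr>carrier := carrier (amalg A B f J)\<rparr>"
    by (simp add: amalg_def)
  then show ?thesis
    using ring.subring_is_ring[OF RDirProd_ring[OF f.R.ring_axioms f.S.ring_axioms] subring_amalg]
    by simp
qed

lemma ring_fA_plus_J: "ring (fA_plus_J A B f J)"
proof -
  have "subring (snd ` carrier (amalg A B f J)) B"
    using ring_hom_ring_snd[OF f.R.ring_axioms f.S.ring_axioms] subring_amalg
    by (rule ring_hom_ring.img_is_subring)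
  moreover have "fA_plus_J A B f J = B\<lparr>carrier := snd ` carrier (amalg A B f J)\<rparr>"
    unfolding snd_image_carrier_amalg by (simp add: fA_plus_J_def)
  ultimately show ?thesis using f.S.subring_is_ring by simp
qed

lemma ring_hom_ring_snd_amalg: "ring_hom_ring (amalg A B f J) (fA_plus_J A B f J) snd"
proof (intro ring_hom_ringI2 ring_amalg ring_fA_plus_J)
  show "snd \<in> ring_hom (amalg A B f J) (fA_plus_J A B f J)"
    using snd_image_carrier_amalg[of A B f J]
      ring_hom_memE[OF ring_hom_ring.homh[OF ring_hom_ring_snd[OF f.R.ring_axioms f.S.ring_axioms]]]
    unfolding ring_hom_def by (auto simp: amalg_def fA_plus_J_def)
qed

lemma nilr_amalg_iff:
  "(a, b) \<in> nilr (amalg A B f J) \<longleftrightarrow>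
     (a, b) \<in> carrier (amalg A B f J) \<and> a \<in> nilr A \<and> b \<in> nilr B"
proof
  assume "(a, b) \<in> nilr (amalg A B f J)"
  then show "(a, b) \<in> carrier (amalg A B f J) \<and> a \<in> nilr A \<and> b \<in> nilr B"
    unfolding nilr_def by (auto simp: nat_pow_amalg mem_carrier_amalg_iff)
next
  assume ab: "(a, b) \<in> carrier (amalg A B f J) \<and> a \<in> nilr A \<and> b \<in> nilr B"
  then obtain m n :: nat where "a [^]\<^bsub>A\<^esub> m = \<zero>\<^bsub>A\<^esub>" "b [^]\<^bsub>B\<^esub> n = \<zero>\<^bsub>B\<^esub>"
    unfolding nilr_def by blast
  then have "a [^]\<^bsub>A\<^esub> (m + n) = \<zero>\<^bsub>A\<^esub>" "b [^]\<^bsub>B\<^esub> (m + n) = \<zero>\<^bsub>B\<^esub>"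
    using ab f.R.nat_pow_eq_zero_mono f.S.nat_pow_eq_zero_mono unfolding nilr_def by auto
  then show "(a, b) \<in> nilr (amalg A B f J)"
    using ab unfolding nilr_def by (auto simp: nat_pow_amalg)
qed

lemma nilr_amalg_iff_nilr_snd:
  assumes inj: "inj_on f (carrier A)"
    and fA_J: "f ` carrier A \<inter> J = {\<zero>\<^bsub>B\<^esub>} \<or> J \<subseteq> nilr B"
    and ab: "(a, b) \<in> carrier (amalg A B f J)"
  shows "(a, b) \<in> nilr (amalg A B f J) \<longleftrightarrow> b \<in> nilr (fA_plus_J A B f J)"
proof
  assume "(a, b) \<in> nilr (amalg A B f J)"
  then show "b \<in> nilr (fA_plus_J A B f J)"
    using snd_image_carrier_amalg[of A B f J] by (force simp: nilr_amalg_iff nilr_fA_plus_J_iff)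
next
  assume "b \<in> nilr (fA_plus_J A B f J)"
  then have b: "b \<in> nilr B" by (simp add: nilr_fA_plus_J_iff)
  then obtain n :: nat where bn: "b [^]\<^bsub>B\<^esub> n = \<zero>\<^bsub>B\<^esub>" unfolding nilr_def by blast
  have a: "a \<in> carrier A" using ab by (simp add: mem_carrier_amalg_iff)
  have "(a, b) [^]\<^bsub>amalg A B f J\<^esub> n \<in> carrier (amalg A B f J)"
    using monoid.nat_pow_closed[OF ring.is_monoid[OF ring_amalg] ab] .
  then have "\<zero>\<^bsub>B\<^esub> \<ominus>\<^bsub>B\<^esub> f (a [^]\<^bsub>A\<^esub> n) \<in> J"
    by (simp add: nat_pow_amalg bn mem_carrier_amalg_iff)
  then have "f (a [^]\<^bsub>A\<^esub> n) \<in> J"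
    using a J.a_inv_closed
    by (metis f.R.nat_pow_closed f.hom_closed f.S.minus_minus f.S.l_zero f.S.minus_eq f.S.a_inv_closed)
  then have "f (a [^]\<^bsub>A\<^esub> n) \<in> nilr B"
    using fA_J a by (auto simp: nilr_def intro: exI[of _ 1])
  then have "a \<in> nilr A"
    using inj a by (intro f.R.nilr_of_nat_pow[OF a] f.nilr_of_inj_hom) auto
  then show "(a, b) \<in> nilr (amalg A B f J)"
    using ab b by (simp add: nilr_amalg_iff)
qed

end

theorem theorem3p1:
  fixes A :: "('a, 'm) ring_scheme" and B :: "('b, 'n) ring_scheme"
    and f :: "'a \<Rightarrow> 'b" and J :: "'b set"
  assumes "ring A" and "ring B"
    and "f \<in> ring_hom A B" and "inj_on f (carrier A)"
    and "ideal J B" and "J \<noteq> carrier B"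
    and "f ` carrier A \<inter> J = {\<zero>\<^bsub>B\<^esub>} \<or> J \<subseteq> nilr B"
  shows "nil_armendariz (amalg A B f J) \<longleftrightarrow> nil_armendariz (fA_plus_J A B f J)"
proof -
  have hom: "ring_hom_ring A B f"
    using assms(1-3) by (rule ring_hom_ringI2)
  show ?thesis
  proof (rule nil_armendariz_iff_surj_hom)
    show "ring_hom_ring (amalg A B f J) (fA_plus_J A B f J) snd"
      using hom assms(5) by (rule ring_hom_ring_snd_amalg)
    show "snd ` carrier (amalg A B f J) = carrier (fA_plus_J A B f J)"
      by (rule snd_image_carrier_amalg)
    fix x assume "x \<in> carrier (amalg A B f J)"
    then show "x \<in> nilr (amalg A B f J) \<longleftrightarrow> snd x \<in> nilr (fA_plus_J A B f J)"
      using nilr_amalg_iff_nilr_snd[OF hom assms(5,4,7)] by (cases x) simp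
  qed
qed

end
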